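(* Let $G$ be a cubic graph with $fn(G)=2$, and let $(G,o)$ and $(G,o')$ be two orientations of $G$ such that every edge of $G$ is deletable in $(G,o)$ or in $(G,o')$. Then: 1. every vertex has at least one incoming and at least one outgoing edge in $(G,o')$; 2. if $uv\notin D(G,o)$, then the two edges incident with $u$ other than $uv$ are oriented one into $u$ and one out of $u$ in $(G,o')$; 3. if $uv,vw\notin D(G,o)$ (with $u\neq w$), then in $(G,o')$ these edges are oriented either as $u\to v$, $w\to v$ or as $v\to u$, $v\to w$.
   Context: An orientation is strong if for every ordered pair of distinct vertices $u,v$ there is a directed $uv$-path. An edge $e$ is deletable in an orientation $(G,o)$ if the restriction of $o$ to $E(G)\setminus\{e\}$ is a strong orientation of $G-e$. $D(G,o)$ denotes the set of edges deletable in $(G,o)$. For a $3$-edge-connected graph $G$, $fn(G)$ is the minimum number $k$ such that $G$ admits $k$ orientations with every edge deletable in at least one of them. *)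

theory Defs
  imports Main
begin

definition graph :: "'a set \<Rightarrow> 'a set set \<Rightarrow> bool" where
  "graph V E \<longleftrightarrow> finite V \<and>
     (\<forall>e\<in>E. \<exists>u v. u \<noteq> v \<and> u \<in> V \<and> v \<in> V \<and> e = {u, v})"

definition cubic :: "'a set \<Rightarrow> 'a set set \<Rightarrow> bool" where
  "cubic V E \<longleftrightarrow> graph V E \<and> (\<forall>v\<in>V. card {e\<in>E. v \<in> e} = 3)"

definition connected_graph :: "'a set \<Rightarrow> 'a set set \<Rightarrow> bool" where
  "connected_graph V E \<longleftrightarrow>
     (\<forall>u\<in>V. \<forall>v\<in>V. (u, v) \<in> {(x, y). {x, y} \<in> E}\<^sup>*)"

definition edge_connected :: "nat \<Rightarrow> 'a set \<Rightarrow> 'a set set \<Rightarrow> bool" where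
  "edge_connected k V E \<longleftrightarrow>
     (\<forall>F. F \<subseteq> E \<and> card F < k \<longrightarrow> connected_graph V (E - F))"

definition orientation :: "'a set \<Rightarrow> 'a set set \<Rightarrow> ('a \<times> 'a) set \<Rightarrow> bool" where
  "orientation V E A \<longleftrightarrow>
     (\<forall>(u, v)\<in>A. {u, v} \<in> E) \<and>
     (\<forall>u v. {u, v} \<in> E \<longrightarrow> ((u, v) \<in> A \<longleftrightarrow> (v, u) \<notin> A))"

definition strong :: "'a set \<Rightarrow> ('a \<times> 'a) set \<Rightarrow> bool" where
  "strong V A \<longleftrightarrow> (\<forall>u\<in>V. \<forall>v\<in>V. u \<noteq> v \<longrightarrow> (u, v) \<in> A\<^sup>+)"

definition restrict_or :: "('a \<times> 'a) set \<Rightarrow> 'a set \<Rightarrow> ('a \<times> 'a) set" where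
  "restrict_or A e = {(u, v). (u, v) \<in> A \<and> {u, v} \<noteq> e}"

definition deletable :: "'a set \<Rightarrow> 'a set set \<Rightarrow> ('a \<times> 'a) set \<Rightarrow> 'a set \<Rightarrow> bool" where
  "deletable V E A e \<longleftrightarrow> e \<in> E \<and> strong V (restrict_or A e)"

definition D :: "'a set \<Rightarrow> 'a set set \<Rightarrow> ('a \<times> 'a) set \<Rightarrow> 'a set set" where
  "D V E A = {e \<in> E. deletable V E A e}"

text \<open>Frank number (meaningful for 3-edge-connected graphs).\<close>
definition fn :: "'a set \<Rightarrow> 'a set set \<Rightarrow> nat" where
  "fn V E = (LEAST k. \<exists>os :: nat \<Rightarrow> ('a \<times> 'a) set.
      (\<forall>i<k. orientation V E (os i)) \<and> (\<forall>e\<in>E. \<exists>i<k. e \<in> D V E (os i)))"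

end

theory Submission
  imports Defs
begin

text \<open>Every edge not deletable in the first orientation is deletable in the second, so the
  three claims are local properties of deletable edges in a single orientation of a cubic
  graph. A deletable edge \<open>uv\<close> leaves a strong orientation, so \<open>u\<close> keeps an incoming and an
  outgoing arc among its two other edges; in a cubic graph this forces them to be one in and
  one out. Applying this at \<open>v\<close> to two deletable edges \<open>uv\<close>, \<open>vw\<close> and the third edge \<open>vz\<close> shows
  that both point into \<open>v\<close> or both out of \<open>v\<close>. Finally, a source or sink of the second
  orientation would make it have no deletable edge at all, so the first orientation alone
  would cover every edge, giving \<open>fn V E \<le> 1\<close>.\<close>

lemma cubic_edge_endpoints:
  assumes "cubic V E" and "{u, v} \<in> E"
  shows "u \<in> V" "v \<in> V" "u \<noteq> v"
  using assms by (auto simp: cubic_def graph_def doubleton_eq_iff)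

lemma cubic_card_neighbours:
  assumes c: "cubic V E" and v: "v \<in> V"
  shows "card {a. {v, a} \<in> E} = 3"
proof -
  have g: "graph V E" and c3: "card {e\<in>E. v \<in> e} = 3" using c v by (auto simp: cubic_def)
  have "{e\<in>E. v \<in> e} = (\<lambda>a. {v, a}) ` {a. {v, a} \<in> E}"
  proof
    show "{e\<in>E. v \<in> e} \<subseteq> (\<lambda>a. {v, a}) ` {a. {v, a} \<in> E}"
    proof
      fix e assume e: "e \<in> {e\<in>E. v \<in> e}"
      then obtain x y where "e = {x, y}" using g by (auto simp: graph_def)
      with e show "e \<in> (\<lambda>a. {v, a}) ` {a. {v, a} \<in> E}" by (auto simp: insert_commute)
    qed
  qed auto
  moreover have "inj_on (\<lambda>a. {v, a}) {a. {v, a} \<in> E}"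
    by (auto simp: inj_on_def doubleton_eq_iff)
  ultimately show ?thesis using c3 card_image by fastforce
qed

lemma cubic_neighbour_cases:
  assumes c: "cubic V E" and v: "v \<in> V"
    and "{v, a} \<in> E" "{v, b} \<in> E" "{v, c} \<in> E" "{v, d} \<in> E"
    and "a \<noteq> b" "a \<noteq> c" "b \<noteq> c"
  shows "d = a \<or> d = b \<or> d = c"
proof (rule ccontr)
  assume "\<not> ?thesis"
  then have "{a, b, c, d} \<subseteq> {a. {v, a} \<in> E}" "card {a, b, c, d} = 4" using assms by auto
  moreover have "finite {a. {v, a} \<in> E}"
    using cubic_card_neighbours[OF c v] card.infinite by fastforce
  ultimately have "4 \<le> card {a. {v, a} \<in> E}" by (metis card_mono)
  then show False using cubic_card_neighbours[OF c v] by simp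
qed

lemma cubic_third_neighbour:
  assumes "cubic V E" and "v \<in> V"
  obtains z where "{v, z} \<in> E" "z \<noteq> u" "z \<noteq> w"
proof -
  have "card {u, w} \<le> 2" by (simp add: card_insert_le_m1)
  then have "card {u, w} < card {a. {v, a} \<in> E}"
    using cubic_card_neighbours[OF assms] by simp
  then have "\<not> {a. {v, a} \<in> E} \<subseteq> {u, w}"
    using card_mono[of "{u, w}" "{a. {v, a} \<in> E}"] by auto
  then show ?thesis using that by auto
qed

lemma orientation_arc_edge:
  assumes "orientation V E A" and "(u, v) \<in> A"
  shows "{u, v} \<in> E"
  using assms by (auto simp: orientation_def)

lemma orientation_antisym:
  assumes "orientation V E A" and "(u, v) \<in> A"
  shows "(v, u) \<notin> A"
  using assms by (auto simp: orientation_def)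

lemma strong_in_out_arcs:
  assumes "strong V A" "v \<in> V" "w \<in> V" "w \<noteq> v"
  shows "\<exists>a. (a, v) \<in> A" "\<exists>b. (v, b) \<in> A"
proof -
  have "(w, v) \<in> A\<^sup>+" "(v, w) \<in> A\<^sup>+" using assms by (auto simp: strong_def)
  then show "\<exists>a. (a, v) \<in> A" "\<exists>b. (v, b) \<in> A" by (auto dest: tranclD tranclD2)
qed

lemma deletable_in_out_arcs:
  assumes c: "cubic V E" and o: "orientation V E A" and uv: "{u, v} \<in> D V E A"
  obtains a b where "(a, u) \<in> A" "a \<noteq> v" "{u, a} \<in> E" "(u, b) \<in> A" "b \<noteq> v" "{u, b} \<in> E"
proof -
  have e: "{u, v} \<in> E" and s: "strong V (restrict_or A {u, v})"
    using uv by (auto simp: D_def deletable_def)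
  note ends = cubic_edge_endpoints[OF c e]
  obtain a b where "(a, u) \<in> restrict_or A {u, v}" "(u, b) \<in> restrict_or A {u, v}"
    using strong_in_out_arcs[OF s ends(1,2)] ends(3) by metis
  then have "(a, u) \<in> A" "a \<noteq> v" "(u, b) \<in> A" "b \<noteq> v"
    by (auto simp: restrict_or_def insert_commute)
  moreover have "{u, a} \<in> E" "{u, b} \<in> E"
    using orientation_arc_edge[OF o \<open>(a, u) \<in> A\<close>] orientation_arc_edge[OF o \<open>(u, b) \<in> A\<close>]
    by (simp_all add: insert_commute)
  ultimately show ?thesis using that by blast
qed

lemma deletable_other_edges_in_out:
  assumes c: "cubic V E" and o: "orientation V E A" and uv: "{u, v} \<in> D V E A"
    and "{u, x} \<in> E" "{u, y} \<in> E" "x \<noteq> v" "y \<noteq> v" "x \<noteq> y"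
  shows "((x, u) \<in> A \<and> (u, y) \<in> A) \<or> ((y, u) \<in> A \<and> (u, x) \<in> A)"
proof -
  obtain a b where a: "(a, u) \<in> A" "a \<noteq> v" "{u, a} \<in> E"
    and b: "(u, b) \<in> A" "b \<noteq> v" "{u, b} \<in> E"
    using deletable_in_out_arcs[OF c o uv] .
  have e: "{u, v} \<in> E" using uv by (simp add: D_def)
  have u: "u \<in> V" using cubic_edge_endpoints[OF c e] by simp
  have "a = x \<or> a = y" "b = x \<or> b = y"
    using cubic_neighbour_cases[OF c u e \<open>{u, x} \<in> E\<close> \<open>{u, y} \<in> E\<close>] a b assms(6-8) by auto
  moreover have "a \<noteq> b" using orientation_antisym[OF o a(1)] b(1) by auto
  ultimately show ?thesis using a b by auto
qed

lemma deletable_adjacent_same_direction: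
  assumes c: "cubic V E" and o: "orientation V E A"
    and uv: "{u, v} \<in> D V E A" and vw: "{v, w} \<in> D V E A" and "u \<noteq> w"
  shows "((u, v) \<in> A \<and> (w, v) \<in> A) \<or> ((v, u) \<in> A \<and> (v, w) \<in> A)"
proof -
  have "{u, v} \<in> E" "{v, w} \<in> E" using uv vw by (auto simp: D_def)
  note ends = cubic_edge_endpoints[OF c this(1)] cubic_edge_endpoints[OF c this(2)]
  obtain z where z: "{v, z} \<in> E" "z \<noteq> u" "z \<noteq> w"
    using cubic_third_neighbour[OF c ends(2)] by blast
  have "{v, u} \<in> D V E A" using uv by (simp add: insert_commute)
  from deletable_other_edges_in_out[OF c o this \<open>{v, w} \<in> E\<close> z(1)] z ends \<open>u \<noteq> w\<close>
  have "((w, v) \<in> A \<and> (v, z) \<in> A) \<or> ((z, v) \<in> A \<and> (v, w) \<in> A)" by auto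
  moreover from deletable_other_edges_in_out[OF c o vw _ z(1)] z ends \<open>u \<noteq> w\<close> \<open>{u, v} \<in> E\<close>
  have "((u, v) \<in> A \<and> (v, z) \<in> A) \<or> ((z, v) \<in> A \<and> (v, u) \<in> A)"
    by (auto simp: insert_commute)
  ultimately show ?thesis using orientation_antisym[OF o, of v z] by blast
qed

lemma source_or_sink_no_deletable:
  assumes c: "cubic V E" and v: "v \<in> V"
    and no_arc: "(\<nexists>a. (a, v) \<in> A) \<or> (\<nexists>b. (v, b) \<in> A)"
  shows "D V E A = {}"
proof (rule ccontr)
  assume "D V E A \<noteq> {}"
  then obtain e where "strong V (restrict_or A e)" by (auto simp: D_def deletable_def)
  moreover obtain w where "{v, w} \<in> E"
    using cubic_third_neighbour[OF c v] by blast
  note w = cubic_edge_endpoints[OF c this]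
  ultimately have "\<exists>a. (a, v) \<in> restrict_or A e" "\<exists>b. (v, b) \<in> restrict_or A e"
    using strong_in_out_arcs[OF _ v w(2)] w(3) by metis+
  then show False using no_arc by (auto simp: restrict_or_def)
qed

lemma fn_le_1_if_all_deletable:
  assumes "orientation V E A" and "\<forall>e\<in>E. e \<in> D V E A"
  shows "fn V E \<le> 1"
  unfolding fn_def
  by (rule Least_le, rule exI[of _ "\<lambda>_. A"]) (use assms in auto)

theorem mainTheorem12:
  fixes V :: "'a set" and E :: "'a set set" and o1 o2 :: "('a \<times> 'a) set"
  assumes "cubic V E"
    and "edge_connected 3 V E"
    and "fn V E = 2"
    and "orientation V E o1" and "orientation V E o2"
    and "\<forall>e\<in>E. e \<in> D V E o1 \<or> e \<in> D V E o2"
  shows "(\<forall>v\<in>V. (\<exists>u. (u, v) \<in> o2) \<and> (\<exists>w. (v, w) \<in> o2))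
    \<and> (\<forall>u v x y. {u, v} \<in> E \<and> {u, v} \<notin> D V E o1 \<and>
          {u, x} \<in> E \<and> {u, y} \<in> E \<and> x \<noteq> v \<and> y \<noteq> v \<and> x \<noteq> y \<longrightarrow>
          ((x, u) \<in> o2 \<and> (u, y) \<in> o2) \<or> ((y, u) \<in> o2 \<and> (u, x) \<in> o2))
    \<and> (\<forall>u v w. {u, v} \<in> E \<and> {v, w} \<in> E \<and> u \<noteq> w \<and>
          {u, v} \<notin> D V E o1 \<and> {v, w} \<notin> D V E o1 \<longrightarrow>
          ((u, v) \<in> o2 \<and> (w, v) \<in> o2) \<or> ((v, u) \<in> o2 \<and> (v, w) \<in> o2))"
proof -
  note c = assms(1) and o1 = assms(4) and o2 = assms(5)
  have in_D2: "e \<in> D V E o2" if "e \<in> E" "e \<notin> D V E o1" for e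
    using assms(6) that by blast
  have "(\<exists>u. (u, v) \<in> o2) \<and> (\<exists>w. (v, w) \<in> o2)" if v: "v \<in> V" for v
  proof (rule ccontr)
    assume "\<not> ?thesis"
    then have "D V E o2 = {}" using source_or_sink_no_deletable[OF c v] by blast
    then have "fn V E \<le> 1" using fn_le_1_if_all_deletable[OF o1] assms(6) by blast
    with assms(3) show False by simp
  qed
  moreover note deletable_other_edges_in_out[OF c o2 in_D2]
    deletable_adjacent_same_direction[OF c o2 in_D2 in_D2]
  ultimately show ?thesis by blast
qed

end
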